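(* Let $m\ge2$, $n\ge1$, and let $\rho:BS(1,m)\to T_n(\mathbb Z[1/m])$ be an injective homomorphism such that $\Delta(\rho(a))\ne\mathbf 1_n$ and all diagonal entries of $\rho(t)$ are strictly positive. Then $\rho(BS(1,m))$ has CSP.
   Context: $BS(1,m)=\langle a,t\mid tat^{-1}=a^m\rangle$. $T_n(\mathbb Z[1/m])$ is the group of invertible upper triangular $n\times n$ matrices over $\mathbb Z[1/m]$, and $\Delta:T_n(\mathbb Z[1/m])\to D_n(\mathbb Z[1/m])$ is the homomorphism sending a matrix to the diagonal matrix with the same diagonal. For a subgroup $G\le GL_n(\mathbb Z[1/m])$ and an integer $N>0$ coprime to $m$, the congruence subgroup $G(N)$ is $G\cap\ker\big(GL_n(\mathbb Z[1/m])\to GL_n(\mathbb Z/N\mathbb Z)\big)$. $G$ has the congruence subgroup property (CSP) if every finite-index subgroup of $G$ contains $G(N)$ for some $N>0$ coprime to $m$. *)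

theory Defs
  imports "Jordan_Normal_Form.Matrix" "HOL-Algebra.Coset"
begin

definition Zinv :: "nat \<Rightarrow> rat set" where
  "Zinv m = {q. \<exists>(z::int) (k::nat). q = of_int z / (of_nat m) ^ k}"

definition mat_over :: "nat \<Rightarrow> nat \<Rightarrow> rat mat set" where
  "mat_over m n = {A \<in> carrier_mat n n. \<forall>i<n. \<forall>j<n. A $$ (i,j) \<in> Zinv m}"

definition GLZ :: "nat \<Rightarrow> nat \<Rightarrow> rat mat set" where
  "GLZ m n = {A \<in> mat_over m n. \<exists>B \<in> mat_over m n. A * B = 1\<^sub>m n \<and> B * A = 1\<^sub>m n}"

definition GLZ_group :: "nat \<Rightarrow> nat \<Rightarrow> rat mat monoid" where
  "GLZ_group m n = \<lparr>carrier = GLZ m n, mult = (\<lambda>A B. A * B), one = 1\<^sub>m n\<rparr>"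

definition TZ :: "nat \<Rightarrow> nat \<Rightarrow> rat mat set" where
  "TZ m n = {A \<in> GLZ m n. upper_triangular A}"

text \<open>Reduction modulo N (N coprime to m): the kernel of Z[1/m] -> Z/NZ is N Z[1/m].
  The congruence subgroup G(N) = G \<inter> ker(GL_n(Z[1/m]) -> GL_n(Z/NZ)).\<close>
definition cong_zero :: "nat \<Rightarrow> nat \<Rightarrow> rat \<Rightarrow> bool" where
  "cong_zero m N q \<longleftrightarrow> (\<exists>r \<in> Zinv m. q = of_nat N * r)"

definition cong_subgroup :: "nat \<Rightarrow> nat \<Rightarrow> rat mat set \<Rightarrow> nat \<Rightarrow> rat mat set" where
  "cong_subgroup m n G N =
     {A \<in> G. \<forall>i<n. \<forall>j<n. cong_zero m N (A $$ (i,j) - (1\<^sub>m n) $$ (i,j))}"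

definition has_CSP :: "nat \<Rightarrow> nat \<Rightarrow> rat mat set \<Rightarrow> bool" where
  "has_CSP m n G \<longleftrightarrow>
     (\<forall>K. subgroup K ((GLZ_group m n)\<lparr>carrier := G\<rparr>)
          \<and> finite (rcosets\<^bsub>(GLZ_group m n)\<lparr>carrier := G\<rparr>\<^esub> K)
        \<longrightarrow> (\<exists>N>0. coprime N m \<and> cong_subgroup m n G N \<subseteq> K))"

text \<open>The Baumslag--Solitar group BS(1,m), realised concretely as the group of affine maps
  x \<mapsto> m^k x + b of Q with k \<in> Z and b \<in> Z[1/m]; the pair (k,b) encodes this map and the
  product is composition. The generators are a = (0,1) (x \<mapsto> x+1) and t = (1,0) (x \<mapsto> m x),
  which satisfy t a t^-1 = a^m; this is the standard isomorphism
  <a,t | t a t^-1 = a^m> \<cong> Z[1/m] \<rtimes> Z.\<close>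
definition BS :: "nat \<Rightarrow> (int \<times> rat) monoid" where
  "BS m = \<lparr>carrier = {(k, b). b \<in> Zinv m},
           mult = (\<lambda>(k, b) (l, c). (k + l, (of_nat m) powi k * c + b)),
           one = (0, 0)\<rparr>"

definition BS_a :: "int \<times> rat" where "BS_a = (0, 1)"
definition BS_t :: "int \<times> rat" where "BS_t = (1, 0)"

end

(*
  Write (k, b) for the affine map x |-> m^k x + b of Z[1/m], so that a^c = (0, c) and t = (1, 0).
  Since t a^x t^-1 = a^(m x), the diagonal of rho(a^x) is a character delta of Z[1/m] with
  delta^m = delta; hence delta = +-1 and every rho(a^(2c)) is unitriangular. On the first
  superdiagonal on which some rho(a^(2c)) is nontrivial, its entry is additive in c, so it
  equals c v for a fixed nonzero v in Z[1/m].

  Let K have finite index in G = rho(BS(1,m)) and F = [G : K]!. Then g^F lies in K for every g,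
  so K contains every rho(k, b) with F | k in Z and F | b in Z[1/m]. Put
  Y = (m^F - 1)(m - 1) F and choose N prime to m with Y v dividing N in Z[1/m]. If
  rho(0, c) = 1 mod N then c v is divisible by N, hence c by Y. If rho(k, b) = 1 mod N, then so
  are its commutators with a and t, the translations by m^k - 1 and (1 - m) b. Thus
  m^F - 1 divides m^k - 1 in Z[1/m], which forces F | k, and F divides b.
*)
theory Submission
  imports Defs
begin

section \<open>Divisibility in \<open>\<int>[1/m]\<close>\<close>

lemma Zinv_of_int [simp]: "of_int z \<in> Zinv m"
  unfolding Zinv_def by (intro CollectI exI[of _ z] exI[of _ 0]) simp

lemma Zinv_of_nat [simp]: "of_nat N \<in> Zinv m"
  using Zinv_of_int[of "int N"] by simp

lemma Zinv_numeral [simp]: "numeral k \<in> Zinv m"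
  using Zinv_of_nat[of "numeral k"] by simp

lemma Zinv_power [simp]: "of_nat m ^ j \<in> Zinv m"
  using Zinv_of_nat[of "m ^ j"] by simp

lemma Zinv_0 [simp]: "0 \<in> Zinv m" and Zinv_1 [simp]: "1 \<in> Zinv m"
  using Zinv_of_int[of 0] Zinv_of_int[of 1] by simp_all

lemma Zinv_add:
  assumes "m > 0" "a \<in> Zinv m" "b \<in> Zinv m"
  shows "a + b \<in> Zinv m"
proof -
  obtain z1 k1 z2 k2 where a: "a = of_int z1 / of_nat m ^ k1" and b: "b = of_int z2 / of_nat m ^ k2"
    using assms(2,3) unfolding Zinv_def by blast
  have "a + b = of_int (z1 * int m ^ k2 + z2 * int m ^ k1) / of_nat m ^ (k1 + k2)"
    using assms(1) by (simp add: a b field_simps power_add)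
  then show ?thesis unfolding Zinv_def by blast
qed

lemma Zinv_mult:
  assumes "a \<in> Zinv m" "b \<in> Zinv m"
  shows "a * b \<in> Zinv m"
proof -
  obtain z1 k1 z2 k2 where "a = of_int z1 / of_nat m ^ k1" "b = of_int z2 / of_nat m ^ k2"
    using assms unfolding Zinv_def by blast
  then have "a * b = of_int (z1 * z2) / of_nat m ^ (k1 + k2)"
    by (simp add: power_add)
  then show ?thesis unfolding Zinv_def by blast
qed

lemma Zinv_uminus: "a \<in> Zinv m \<Longrightarrow> - a \<in> Zinv m"
  using Zinv_mult[OF Zinv_of_int[of "-1"]] by simp

lemma Zinv_diff: "m > 0 \<Longrightarrow> a \<in> Zinv m \<Longrightarrow> b \<in> Zinv m \<Longrightarrow> a - b \<in> Zinv m"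
  using Zinv_add[OF _ _ Zinv_uminus] by simp

lemma Zinv_divide_power:
  assumes "a \<in> Zinv m"
  shows "a / of_nat m ^ j \<in> Zinv m"
proof -
  obtain z k where "a = of_int z / of_nat m ^ k"
    using assms unfolding Zinv_def by blast
  then have "a / of_nat m ^ j = of_int z / of_nat m ^ (k + j)"
    by (simp add: power_add)
  then show ?thesis unfolding Zinv_def by blast
qed

lemma Zinv_power_int [simp]: "of_nat m powi k \<in> Zinv m"
proof (cases "k \<ge> 0")
  case True
  then show ?thesis using Zinv_of_nat[of "m ^ nat k" m] by (simp add: power_int_def)
next
  case False
  then show ?thesis using Zinv_divide_power[OF Zinv_1, of m "nat (- k)"]
    by (simp add: power_int_def power_inverse divide_inverse)
qed

definition Zinv_dvd :: "nat \<Rightarrow> rat \<Rightarrow> rat \<Rightarrow> bool" where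
  "Zinv_dvd m a b \<longleftrightarrow> (\<exists>r\<in>Zinv m. b = a * r)"

lemma cong_zero_iff_Zinv_dvd: "cong_zero m N q \<longleftrightarrow> Zinv_dvd m (of_nat N) q"
  unfolding cong_zero_def Zinv_dvd_def ..

lemma Zinv_dvd_0 [simp]: "Zinv_dvd m a 0"
  unfolding Zinv_dvd_def by (auto intro: bexI[of _ 0])

lemma Zinv_dvd_add:
  "m > 0 \<Longrightarrow> Zinv_dvd m a b \<Longrightarrow> Zinv_dvd m a c \<Longrightarrow> Zinv_dvd m a (b + c)"
  unfolding Zinv_dvd_def by (metis Zinv_add distrib_left)

lemma Zinv_dvd_uminus: "Zinv_dvd m a b \<Longrightarrow> Zinv_dvd m a (- b)"
  unfolding Zinv_dvd_def by (metis Zinv_uminus mult_minus_right)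

lemma Zinv_dvd_mult_right: "Zinv_dvd m a b \<Longrightarrow> c \<in> Zinv m \<Longrightarrow> Zinv_dvd m a (b * c)"
  unfolding Zinv_dvd_def by (metis Zinv_mult mult.assoc)

lemma Zinv_dvd_mult_left: "Zinv_dvd m a b \<Longrightarrow> c \<in> Zinv m \<Longrightarrow> Zinv_dvd m a (c * b)"
  using Zinv_dvd_mult_right by (simp add: mult.commute)

lemma Zinv_dvd_trans: "Zinv_dvd m a b \<Longrightarrow> Zinv_dvd m b c \<Longrightarrow> Zinv_dvd m a c"
  unfolding Zinv_dvd_def by (metis Zinv_mult mult.assoc)

lemma Zinv_dvd_sum:
  "m > 0 \<Longrightarrow> (\<And>i. i \<in> A \<Longrightarrow> Zinv_dvd m a (f i)) \<Longrightarrow> Zinv_dvd m a (sum f A)"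
  by (induction A rule: infinite_finite_induct) (simp_all add: Zinv_dvd_add)

lemma Zinv_dvd_mult_cancel_right:
  "c \<noteq> 0 \<Longrightarrow> Zinv_dvd m (a * c) (b * c) \<Longrightarrow> Zinv_dvd m a b"
  unfolding Zinv_dvd_def by auto

lemma Zinv_dvd_of_int: "a dvd b \<Longrightarrow> Zinv_dvd m (of_int a) (of_int b)"
  unfolding Zinv_dvd_def by (metis Zinv_of_int dvdE of_int_mult)

lemma Zinv_dvd_divide_power: "Zinv_dvd m a b \<Longrightarrow> Zinv_dvd m a (b / of_nat m ^ j)"
  unfolding Zinv_dvd_def by (metis Zinv_divide_power times_divide_eq_right)

lemma int_dvd_if_Zinv_dvd:
  assumes "m > 0" "coprime a (int m)" "Zinv_dvd m (of_int a) (of_int b)"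
  shows "a dvd b"
proof -
  obtain z k where "of_int b = of_int a * (of_int z / of_nat m ^ k :: rat)"
    using assms(3) unfolding Zinv_dvd_def Zinv_def by blast
  then have "(of_int (b * int m ^ k) :: rat) = of_int (a * z)"
    using assms(1) by (simp add: field_simps)
  then have "a dvd b * int m ^ k"
    unfolding of_int_eq_iff by simp
  then show ?thesis
    using assms(2) by (simp add: coprime_dvd_mult_left_iff)
qed

lemma dvd_coprime_times_power:
  fixes m x :: nat
  assumes "m > 0" "x > 0"
  shows "\<exists>N e. N > 0 \<and> coprime N m \<and> x dvd N * m ^ e"
  using assms(2)
proof (induction x rule: less_induct)
  case (less x)
  show ?case
  proof (cases "coprime x m")
    case True
    then show ?thesis using less.prems by (intro exI[of _ x] exI[of _ 0]) auto
  next
    case False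
    define p where "p = gcd x m"
    obtain x' where x': "x = p * x'"
      unfolding p_def by (metis gcd_dvd1 dvdE)
    have "p > 1"
      using False less.prems assms(1) unfolding p_def
      by (metis coprime_iff_gcd_eq_1 gcd_pos_nat less_one nat_neq_iff)
    then have "x' < x" "x' > 0"
      using x' less.prems by auto
    then obtain N e where N: "N > 0" "coprime N m" "x' dvd N * m ^ e"
      using less.IH by blast
    have "p * x' dvd m * (N * m ^ e)"
      using N(3) by (intro mult_dvd_mono) (simp_all add: p_def)
    then have "x dvd N * m ^ Suc e"
      using x' by (simp add: ac_simps)
    then show ?thesis using N(1,2) by blast
  qed
qed

lemma power_minus_one_dvd_imp_dvd:
  fixes m :: int
  assumes "m \<ge> 2" "F \<ge> 1" "m ^ F - 1 dvd m ^ k - 1"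
  shows "F dvd k"
proof -
  define r where "r = k mod F"
  have r: "r < F"
    using assms(2) by (simp add: r_def)
  have "m ^ k - 1 = m ^ r * ((m ^ F) ^ (k div F) - 1) + (m ^ r - 1)"
    by (simp add: r_def algebra_simps flip: power_add power_mult)
  moreover have "m ^ F - 1 dvd (m ^ F) ^ (k div F) - 1"
    by (simp add: power_diff_1_eq)
  ultimately have "m ^ F - 1 dvd m ^ r - 1"
    using assms(3) by (metis dvd_add_right_iff dvd_mult)
  moreover have "0 \<le> m ^ r - 1" "m ^ r - 1 < m ^ F - 1"
    using assms(1) r by (simp_all add: power_strict_increasing)
  ultimately have "m ^ r - 1 = 0"
    by (metis le_less zdvd_not_zless)
  then have "r = 0"
    using one_less_power[of m r] assms(1) by (cases "r = 0") auto
  then show ?thesis by (simp add: r_def dvd_eq_mod_eq_0)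
qed

lemma powi_minus_one_Zinv_dvd_imp_dvd:
  assumes "m \<ge> 2" "F \<ge> 1" "Zinv_dvd m (of_int (int m ^ F - 1)) (of_nat m powi k - 1)"
  shows "int F dvd k"
proof -
  define K where "K = nat \<bar>k\<bar>"
  have "(of_int (int m ^ K - 1) :: rat) = (of_nat m powi k - 1) * (if k \<ge> 0 then 1 else - (of_nat m ^ K))"
    using assms(1) by (auto simp: K_def power_int_def divide_simps)
  then have "Zinv_dvd m (of_int (int m ^ F - 1)) (of_int (int m ^ K - 1))"
    using assms(3) by (auto intro!: Zinv_dvd_uminus Zinv_dvd_mult_right simp del: of_int_diff)
  moreover have "coprime (int m ^ F - 1) (int m)"
    using coprime_diff_one_left[of "int m ^ F"] assms(2) by simp
  ultimately have "int m ^ F - 1 dvd int m ^ K - 1"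
    using assms(1) by (intro int_dvd_if_Zinv_dvd) simp_all
  then have "F dvd K"
    using assms(1,2) by (intro power_minus_one_dvd_imp_dvd[of "int m"]) simp_all
  then show ?thesis
    by (simp add: K_def)
qed

lemma additive_on_Zinv_imp_linear:
  assumes "m > 0"
    and add: "\<And>a b. a \<in> Zinv m \<Longrightarrow> b \<in> Zinv m \<Longrightarrow> \<phi> (a + b) = \<phi> a + (\<phi> b :: rat)"
    and "c \<in> Zinv m"
  shows "\<phi> c = c * \<phi> 1"
proof -
  have of_int_mult: "\<phi> (of_int z * x) = of_int z * \<phi> x" if x: "x \<in> Zinv m" for z x
  proof (induction z rule: int_induct[where k = 0])
    case base
    show ?case using add[of 0 0] by simp
  next
    case (step1 z)
    have "\<phi> (of_int (z + 1) * x) = \<phi> (of_int z * x + x)"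
      by (simp add: distrib_right)
    also have "\<dots> = \<phi> (of_int z * x) + \<phi> x"
      by (rule add[OF Zinv_mult[OF Zinv_of_int x] x])
    finally show ?case
      using step1 by (simp add: distrib_right)
  next
    case (step2 z)
    have "\<phi> (of_int z * x) = \<phi> (of_int (z - 1) * x + x)"
      by (simp add: algebra_simps)
    also have "\<dots> = \<phi> (of_int (z - 1) * x) + \<phi> x"
      by (rule add[OF Zinv_mult[OF Zinv_of_int x] x])
    finally show ?case
      using step2 by (simp add: algebra_simps)
  qed
  obtain z k where c: "c = of_int z / of_nat m ^ k"
    using assms(3) unfolding Zinv_def by blast
  define x where "x = 1 / (of_nat m ^ k :: rat)"
  have x: "x \<in> Zinv m"
    unfolding x_def by (rule Zinv_divide_power[OF Zinv_1])
  have "\<phi> 1 = of_nat m ^ k * \<phi> x"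
    using of_int_mult[OF x, of "int m ^ k"] assms(1) by (simp add: x_def)
  moreover have "\<phi> c = of_int z * \<phi> x"
    using of_int_mult[OF x, of z] by (simp add: c x_def)
  ultimately show ?thesis
    using assms(1) by (simp add: c)
qed

section \<open>Triangular matrices and congruences modulo \<open>N\<close>\<close>

lemma index_mult_mat_sum:
  assumes "A \<in> carrier_mat n n" "B \<in> carrier_mat n n" "i < n" "j < n"
  shows "(A * B) $$ (i,j) = (\<Sum>k<n. A $$ (i,k) * B $$ (k,j))"
  using assms by (simp add: scalar_prod_def atLeast0LessThan)

lemma upper_triangular_mult_diag:
  fixes A B :: "'a :: semiring_0 mat"
  assumes "A \<in> carrier_mat n n" "B \<in> carrier_mat n n" "upper_triangular A" "upper_triangular B" "i < n"
  shows "(A * B) $$ (i,i) = A $$ (i,i) * B $$ (i,i)"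
proof -
  have "(\<Sum>k<n. A $$ (i,k) * B $$ (k,i)) = (\<Sum>k\<in>{i}. A $$ (i,k) * B $$ (k,i))"
  proof (rule sum.mono_neutral_right)
    show "\<forall>k\<in>{..<n} - {i}. A $$ (i,k) * B $$ (k,i) = 0"
    proof
      fix k assume "k \<in> {..<n} - {i}"
      then consider "k < i" | "i < k" "k < n" by force
      then show "A $$ (i,k) * B $$ (k,i) = 0"
        by cases (use assms in \<open>auto simp: upper_triangular_def\<close>)
    qed
  qed (use assms in auto)
  then show ?thesis
    using index_mult_mat_sum[OF assms(1,2,5,5)] by simp
qed

text \<open>For \<open>d \<ge> 1\<close>: the \<open>d\<close>-th term of the lower central series of the unitriangular group.\<close>
definition unitriangular_level :: "nat \<Rightarrow> nat \<Rightarrow> 'a :: ring_1 mat \<Rightarrow> bool" where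
  "unitriangular_level n d X \<longleftrightarrow>
     X \<in> carrier_mat n n \<and> (\<forall>i<n. \<forall>j<n. j < i + d \<longrightarrow> X $$ (i,j) = 1\<^sub>m n $$ (i,j))"

lemma unitriangular_level_mult_entry:
  assumes X: "unitriangular_level n d X" and Y: "unitriangular_level n d Y"
    and "d \<ge> 1" "i < n" "j < n" "j \<le> i + d"
  shows "(X * Y) $$ (i,j) = X $$ (i,j) + Y $$ (i,j) - 1\<^sub>m n $$ (i,j)"
proof -
  have XY: "X \<in> carrier_mat n n" "Y \<in> carrier_mat n n"
    using X Y unfolding unitriangular_level_def by auto
  have Xe: "X $$ (i',j') = (if i' = j' then 1 else 0)"
    and Ye: "Y $$ (i',j') = (if i' = j' then 1 else 0)"
    if "i' < n" "j' < n" "j' < i' + d" for i' j'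
    using X Y that unfolding unitriangular_level_def by auto
  have summand: "X $$ (i,k) * Y $$ (k,j) =
      (if k = i then Y $$ (i,j) else 0) + (if k = j then X $$ (i,j) else 0)
        - (if k = i then 1\<^sub>m n $$ (i,j) else 0)"
    if "k < n" for k
  proof -
    consider "k = i" | "k = j" "k \<noteq> i" | "k \<noteq> i" "k \<noteq> j" "k < i + d" | "k \<noteq> j" "i + d \<le> k"
      by linarith
    then show ?thesis
      by cases (use assms(3-) that in \<open>simp_all add: Xe Ye\<close>)
  qed
  have "(X * Y) $$ (i,j) = (\<Sum>k<n. X $$ (i,k) * Y $$ (k,j))"
    by (rule index_mult_mat_sum[OF XY assms(4,5)])
  also have "\<dots> = X $$ (i,j) + Y $$ (i,j) - 1\<^sub>m n $$ (i,j)"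
    using assms(4,5) by (simp add: summand sum.distrib sum_subtractf)
  finally show ?thesis .
qed

definition mat_cong_zero :: "nat \<Rightarrow> nat \<Rightarrow> nat \<Rightarrow> rat mat \<Rightarrow> bool" where
  "mat_cong_zero m n N A \<longleftrightarrow> A \<in> carrier_mat n n \<and> (\<forall>i<n. \<forall>j<n. cong_zero m N (A $$ (i,j)))"

definition cong_one :: "nat \<Rightarrow> nat \<Rightarrow> nat \<Rightarrow> rat mat \<Rightarrow> bool" where
  "cong_one m n N X \<longleftrightarrow>
     X \<in> carrier_mat n n \<and> (\<forall>i<n. \<forall>j<n. cong_zero m N (X $$ (i,j) - 1\<^sub>m n $$ (i,j)))"

lemma cong_oneD:
  "cong_one m n N X \<Longrightarrow> i < n \<Longrightarrow> j < n \<Longrightarrow> Zinv_dvd m (of_nat N) (X $$ (i,j) - 1\<^sub>m n $$ (i,j))"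
  unfolding cong_one_def cong_zero_iff_Zinv_dvd by blast

lemma cong_one_iff_mat_cong_zero:
  "cong_one m n N X \<longleftrightarrow> X \<in> carrier_mat n n \<and> mat_cong_zero m n N (X - 1\<^sub>m n)"
  unfolding cong_one_def mat_cong_zero_def by auto

lemma cong_subgroup_iff:
  assumes "G \<subseteq> carrier_mat n n"
  shows "A \<in> cong_subgroup m n G N \<longleftrightarrow> A \<in> G \<and> cong_one m n N A"
  using assms unfolding cong_subgroup_def cong_one_def by auto

lemma mat_overD:
  assumes "A \<in> mat_over m n"
  shows "A \<in> carrier_mat n n" "i < n \<Longrightarrow> j < n \<Longrightarrow> A $$ (i,j) \<in> Zinv m"
  using assms unfolding mat_over_def by auto

lemma mat_cong_zero_mult:
  assumes "m > 0" "mat_cong_zero m n N A" "B \<in> mat_over m n"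
  shows "mat_cong_zero m n N (A * B)" "mat_cong_zero m n N (B * A)"
proof -
  have A: "A \<in> carrier_mat n n" and B: "B \<in> carrier_mat n n"
    using assms(2,3) mat_overD unfolding mat_cong_zero_def by auto
  have a: "Zinv_dvd m (of_nat N) (A $$ (i,j))" if "i < n" "j < n" for i j
    using assms(2) that unfolding mat_cong_zero_def cong_zero_iff_Zinv_dvd by blast
  have b: "B $$ (i,j) \<in> Zinv m" if "i < n" "j < n" for i j
    using mat_overD(2)[OF assms(3) that] .
  show "mat_cong_zero m n N (A * B)"
    unfolding mat_cong_zero_def cong_zero_iff_Zinv_dvd using A B
    by (auto simp del: index_mult_mat simp add: index_mult_mat_sum
        intro!: Zinv_dvd_sum[OF assms(1)] Zinv_dvd_mult_right a b)
  show "mat_cong_zero m n N (B * A)"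
    unfolding mat_cong_zero_def cong_zero_iff_Zinv_dvd using A B
    by (auto simp del: index_mult_mat simp add: index_mult_mat_sum
        intro!: Zinv_dvd_sum[OF assms(1)] Zinv_dvd_mult_left a b)
qed

lemma cong_one_mult:
  assumes "m > 0" "cong_one m n N X" "cong_one m n N Y" "X \<in> mat_over m n"
  shows "cong_one m n N (X * Y)"
proof -
  have X: "X \<in> carrier_mat n n" and Y: "Y \<in> carrier_mat n n"
    using assms(2,3) unfolding cong_one_def by auto
  have "mat_cong_zero m n N (X * (Y - 1\<^sub>m n))"
    using assms mat_cong_zero_mult(2) cong_one_iff_mat_cong_zero by blast
  moreover have "X * (Y - 1\<^sub>m n) = X * Y - X"
    using X Y by (simp add: mult_minus_distrib_mat)
  ultimately have XY: "cong_zero m N ((X * Y) $$ (i,j) - X $$ (i,j))" if "i < n" "j < n" for i j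
    using X Y that unfolding mat_cong_zero_def by auto
  have "cong_zero m N ((X * Y) $$ (i,j) - X $$ (i,j) + (X $$ (i,j) - 1\<^sub>m n $$ (i,j)))"
    if "i < n" "j < n" for i j
    using XY[OF that] assms(1,2) that unfolding cong_one_def cong_zero_iff_Zinv_dvd
    by (blast intro: Zinv_dvd_add)
  then show ?thesis
    using X Y unfolding cong_one_def by simp
qed

lemma cong_one_inverse:
  assumes "m > 0" "cong_one m n N X" "Y \<in> mat_over m n" "Y * X = 1\<^sub>m n"
  shows "cong_one m n N Y"
proof -
  have X: "X \<in> carrier_mat n n" and Y: "Y \<in> carrier_mat n n"
    using assms(2,3) mat_overD unfolding cong_one_def by auto
  have "mat_cong_zero m n N (Y * (X - 1\<^sub>m n))"
    using assms mat_cong_zero_mult(2) cong_one_iff_mat_cong_zero by blast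
  moreover have "Y * (X - 1\<^sub>m n) = 1\<^sub>m n - Y"
    using X Y assms(4) by (simp add: mult_minus_distrib_mat)
  ultimately have "Zinv_dvd m (of_nat N) (1\<^sub>m n $$ (i,j) - Y $$ (i,j))" if "i < n" "j < n" for i j
    using Y that unfolding mat_cong_zero_def cong_zero_iff_Zinv_dvd by auto
  then have "Zinv_dvd m (of_nat N) (Y $$ (i,j) - 1\<^sub>m n $$ (i,j))" if "i < n" "j < n" for i j
    using Zinv_dvd_uminus that by fastforce
  then show ?thesis
    using Y unfolding cong_one_def cong_zero_iff_Zinv_dvd by blast
qed

lemma cong_one_conj:
  assumes "m > 0" "cong_one m n N X" "P \<in> mat_over m n" "Q \<in> mat_over m n" "P * Q = 1\<^sub>m n"
  shows "cong_one m n N (P * (X * Q))"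
proof -
  have X: "X \<in> carrier_mat n n" and P: "P \<in> carrier_mat n n" and Q: "Q \<in> carrier_mat n n"
    using assms(2-4) mat_overD unfolding cong_one_def by auto
  have "mat_cong_zero m n N (P * ((X - 1\<^sub>m n) * Q))"
    using assms(1-4) mat_cong_zero_mult cong_one_iff_mat_cong_zero by blast
  moreover have "P * ((X - 1\<^sub>m n) * Q) = P * (X * Q) - 1\<^sub>m n"
    using X P Q assms(5) mult_minus_distrib_mat[OF P mult_carrier_mat[OF X Q] Q]
    by (simp add: minus_mult_distrib_mat)
  ultimately show ?thesis
    using X P Q unfolding cong_one_def mat_cong_zero_def by auto
qed

text \<open>The congruence kernel is normal, so it contains the commutators of its elements.\<close>
lemma cong_one_commutator:
  assumes "m > 0" "cong_one m n N X" "X \<in> mat_over m n" "X' \<in> mat_over m n" "X' * X = 1\<^sub>m n"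
    and "P \<in> mat_over m n" "P' \<in> mat_over m n" "P * P' = 1\<^sub>m n"
  shows "cong_one m n N (X * (P * (X' * P')))"
  using cong_one_mult[OF assms(1,2)
      cong_one_conj[OF assms(1) cong_one_inverse[OF assms(1,2,4,5)] assms(6-8)] assms(3)] .

section \<open>Triangular representations of \<open>BS(1,m)\<close>\<close>

text \<open>Pigeonhole on the cosets \<open>K g\<^sup>i\<close>, \<open>0 \<le> i \<le> [G : K]\<close>: some power \<open>g\<^sup>e\<close> with
  \<open>1 \<le> e \<le> [G : K]\<close> lies in \<open>K\<close>, and \<open>e\<close> divides \<open>[G : K]!\<close>.\<close>
lemma (in group) nat_pow_fact_index_mem_subgroup:
  assumes K: "subgroup K G" "finite (rcosets K)" and g: "g \<in> carrier G"
  shows "g [^] (fact (card (rcosets K)) :: nat) \<in> K"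
proof -
  let ?c = "card (rcosets K)"
  have "\<not> inj_on (\<lambda>i::nat. K #> g [^] i) {0..?c}"
  proof
    assume "inj_on (\<lambda>i::nat. K #> g [^] i) {0..?c}"
    moreover have "(\<lambda>i::nat. K #> g [^] i) ` {0..?c} \<subseteq> rcosets K"
      using g by (auto simp: RCOSETS_def)
    ultimately have "card {0..?c} \<le> ?c"
      using card_inj_on_le K(2) by blast
    then show False by simp
  qed
  then obtain i j where ij: "i < j" "j \<le> ?c" "K #> g [^] i = K #> g [^] j"
    unfolding inj_on_def by (metis atLeastAtMost_iff linorder_neqE_nat)
  have "g [^] j \<in> K #> g [^] i"
    using ij(3) rcos_self[OF _ K(1)] g by simp
  then have "g [^] j \<otimes> inv (g [^] i) \<in> K"
    using subgroup.rcos_module_imp[OF K(1) is_group] g by simp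
  moreover have "g [^] j = g [^] (j - i) \<otimes> g [^] i"
    using nat_pow_mult[OF g, of "j - i" i] ij(1) by simp
  ultimately have e: "g [^] (j - i) \<in> K"
    using g by (simp add: m_assoc)
  have "j - i dvd (fact ?c :: nat)"
    using ij(1,2) by (intro dvd_fact) auto
  then obtain q where "(fact ?c :: nat) = (j - i) * q" ..
  moreover have "(g [^] (j - i)) [^] q \<in> K" for q :: nat
    using e by (induction q) (simp_all add: subgroup.one_closed[OF K(1)] subgroup.m_closed[OF K(1)])
  ultimately show ?thesis
    using nat_pow_pow[OF g] by metis
qed

lemma power_eq_1_imp_power2_eq_1:
  fixes d :: "'a :: linordered_idom"
  assumes "d ^ k = 1" "k > 0"
  shows "d\<^sup>2 = 1"
  using assms by (metis mult.commute power_eq_iff_eq_base power_mult power_one zero_le_power2)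

lemma BS_carrier_iff [simp]: "(k, b) \<in> carrier (BS m) \<longleftrightarrow> b \<in> Zinv m"
  by (simp add: BS_def)

lemma BS_mult [simp]: "(k, b) \<otimes>\<^bsub>BS m\<^esub> (l, c) = (k + l, of_nat m powi k * c + b)"
  by (simp add: BS_def)

lemma GLZ_group_mult [simp]: "A \<otimes>\<^bsub>GLZ_group m n\<^esub> B = A * B"
  and GLZ_group_one [simp]: "\<one>\<^bsub>GLZ_group m n\<^esub> = 1\<^sub>m n"
  by (simp_all add: GLZ_group_def)

locale triangular_BS_rep =
  fixes m n :: nat and \<rho> :: "int \<times> rat \<Rightarrow> rat mat"
  assumes m_ge_2: "m \<ge> 2"
    and hom: "\<rho> \<in> hom (BS m) (GLZ_group m n)"
    and image_TZ: "\<rho> ` carrier (BS m) \<subseteq> TZ m n"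
begin

abbreviation image_group :: "rat mat monoid" where
  "image_group \<equiv> (GLZ_group m n)\<lparr>carrier := \<rho> ` carrier (BS m)\<rparr>"

lemma m_pos: "m > 0"
  using m_ge_2 by simp

lemma rho_mult:
  "b \<in> Zinv m \<Longrightarrow> c \<in> Zinv m \<Longrightarrow> \<rho> (k, b) * \<rho> (l, c) = \<rho> (k + l, of_nat m powi k * c + b)"
  using hom_mult[OF hom, of "(k, b)" "(l, c)"] by (simp add: GLZ_group_def)

lemma rho_TZ: "b \<in> Zinv m \<Longrightarrow> \<rho> (k, b) \<in> TZ m n"
  using image_TZ by auto

lemma rho_mat_over: "b \<in> Zinv m \<Longrightarrow> \<rho> (k, b) \<in> mat_over m n"
  and rho_upper_triangular: "b \<in> Zinv m \<Longrightarrow> upper_triangular (\<rho> (k, b))"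
  using rho_TZ unfolding TZ_def GLZ_def by auto

lemma rho_carrier: "b \<in> Zinv m \<Longrightarrow> \<rho> (k, b) \<in> carrier_mat n n"
  using rho_mat_over mat_overD(1) by blast

lemma rho_one: "\<rho> (0, 0) = 1\<^sub>m n"
proof -
  obtain B where B: "B \<in> mat_over m n" "B * \<rho> (0, 0) = 1\<^sub>m n"
    using rho_TZ[of 0 0] unfolding TZ_def GLZ_def by auto
  have C: "\<rho> (0, 0) \<in> carrier_mat n n" "B \<in> carrier_mat n n"
    using rho_carrier[of 0 0] mat_overD(1)[OF B(1)] by auto
  have "\<rho> (0, 0) = (B * \<rho> (0, 0)) * \<rho> (0, 0)"
    using B C by simp
  also have "\<dots> = B * (\<rho> (0, 0) * \<rho> (0, 0))"
    using C by simp
  also have "\<rho> (0, 0) * \<rho> (0, 0) = \<rho> (0, 0)"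
    using rho_mult[of 0 0 0 0] by simp
  finally show ?thesis
    using B by simp
qed

lemma rho_inverse:
  assumes "b \<in> Zinv m"
  shows "\<rho> (k, b) * \<rho> (- k, - (of_nat m powi (- k) * b)) = 1\<^sub>m n"
    and "\<rho> (- k, - (of_nat m powi (- k) * b)) * \<rho> (k, b) = 1\<^sub>m n"
proof -
  have b': "- (of_nat m powi (- k) * b) \<in> Zinv m"
    using assms by (intro Zinv_uminus Zinv_mult Zinv_power_int)
  show "\<rho> (k, b) * \<rho> (- k, - (of_nat m powi (- k) * b)) = 1\<^sub>m n"
    using rho_mult[OF assms b', of k "- k"] m_pos by (simp add: rho_one power_int_minus field_simps)
  show "\<rho> (- k, - (of_nat m powi (- k) * b)) * \<rho> (k, b) = 1\<^sub>m n"
    using rho_mult[OF b' assms, of "- k" k] by (simp add: rho_one)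
qed

lemma image_group_is_group: "group image_group"
proof (rule groupI)
  fix x assume "x \<in> carrier image_group"
  then obtain k b where x: "x = \<rho> (k, b)" "b \<in> Zinv m"
    by auto
  show "\<exists>y\<in>carrier image_group. y \<otimes>\<^bsub>image_group\<^esub> x = \<one>\<^bsub>image_group\<^esub>"
    using rho_inverse(2)[OF x(2), of k] x
    by (auto intro!: bexI[of _ "(- k, - (of_nat m powi (- k) * b))"] Zinv_uminus Zinv_mult)
qed (auto simp: rho_mult rho_one[symmetric] Zinv_add[OF m_pos] Zinv_mult rho_carrier
    intro: assoc_mult_mat[OF rho_carrier rho_carrier rho_carrier])

lemma rho_diag_mult:
  "b \<in> Zinv m \<Longrightarrow> c \<in> Zinv m \<Longrightarrow> i < n \<Longrightarrow>
    (\<rho> (k, b) * \<rho> (l, c)) $$ (i,i) = \<rho> (k, b) $$ (i,i) * \<rho> (l, c) $$ (i,i)"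
  by (rule upper_triangular_mult_diag[OF rho_carrier rho_carrier rho_upper_triangular rho_upper_triangular])

lemma rho_diag_nonzero:
  assumes "b \<in> Zinv m" "i < n"
  shows "\<rho> (k, b) $$ (i,i) \<noteq> 0"
proof -
  have b': "- (of_nat m powi (- k) * b) \<in> Zinv m"
    using assms(1) by (intro Zinv_uminus Zinv_mult Zinv_power_int)
  have "\<rho> (k, b) $$ (i,i) * \<rho> (- k, - (of_nat m powi (- k) * b)) $$ (i,i) = 1"
    using rho_diag_mult[OF assms(1) b' assms(2), of k "- k", symmetric] rho_inverse(1)[OF assms(1), of k]
      assms(2) by simp
  then show ?thesis by auto
qed

lemma rho_translation_diag_add:
  "a \<in> Zinv m \<Longrightarrow> b \<in> Zinv m \<Longrightarrow> i < n \<Longrightarrow>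
    \<rho> (0, a + b) $$ (i,i) = \<rho> (0, a) $$ (i,i) * \<rho> (0, b) $$ (i,i)"
  using rho_diag_mult[of a b i 0 0] rho_mult[of a b 0 0] by (simp add: add.commute)

lemma rho_translation_diag_power:
  assumes "x \<in> Zinv m" "i < n"
  shows "\<rho> (0, of_nat N * x) $$ (i,i) = \<rho> (0, x) $$ (i,i) ^ N"
proof (induction N)
  case 0
  show ?case using assms(2) by (simp add: rho_one)
next
  case (Suc N)
  have "\<rho> (0, of_nat (Suc N) * x) = \<rho> (0, of_nat N * x + x)"
    by (simp add: algebra_simps)
  then show ?case
    using rho_translation_diag_add[OF Zinv_mult[OF Zinv_of_nat assms(1)] assms] Suc by simp
qed

text \<open>Conjugation by \<open>t\<close>: \<open>t a\<^sup>x t\<^sup>-\<^sup>1 = a\<^sup>m\<^sup>x\<close>.\<close>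
lemma rho_translation_diag_scale:
  assumes "x \<in> Zinv m" "i < n"
  shows "\<rho> (0, of_nat m * x) $$ (i,i) = \<rho> (0, x) $$ (i,i)"
proof -
  have mx: "of_nat m * x \<in> Zinv m"
    using assms(1) by (simp add: Zinv_mult)
  have "\<rho> (1, 0) * \<rho> (0, x) = \<rho> (0, of_nat m * x) * \<rho> (1, 0)"
    using rho_mult[OF Zinv_0 assms(1), of 1 0] rho_mult[OF mx Zinv_0, of 0 1] by simp
  then have "\<rho> (1, 0) $$ (i,i) * \<rho> (0, x) $$ (i,i) = \<rho> (0, of_nat m * x) $$ (i,i) * \<rho> (1, 0) $$ (i,i)"
    by (simp only: rho_diag_mult[OF Zinv_0 assms, symmetric] rho_diag_mult[OF mx Zinv_0 assms(2), symmetric])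
  moreover have "\<rho> (1, 0) $$ (i,i) \<noteq> 0"
    by (rule rho_diag_nonzero[OF Zinv_0 assms(2)])
  ultimately show ?thesis
    by (simp add: mult.commute)
qed

text \<open>The diagonal of \<open>\<rho>(a\<^sup>x)\<close> is a character \<open>\<delta>\<close> with \<open>\<delta>\<^sup>m = \<delta>\<close>, so \<open>\<delta> = \<plusminus>1\<close> over \<open>\<rat>\<close>.\<close>
lemma rho_translation_diag_double:
  assumes "x \<in> Zinv m" "i < n"
  shows "\<rho> (0, 2 * x) $$ (i,i) = 1"
proof -
  let ?\<delta> = "\<rho> (0, x) $$ (i,i)"
  have "?\<delta> ^ m = ?\<delta>"
    using rho_translation_diag_power[OF assms, of m, symmetric] rho_translation_diag_scale[OF assms]
    by (rule trans)
  moreover obtain k where k: "m = Suc k"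
    using m_pos gr0_implies_Suc by blast
  ultimately have "?\<delta> * ?\<delta> ^ k = ?\<delta> * 1"
    by simp
  then have "?\<delta> ^ k = 1"
    using rho_diag_nonzero[OF assms(1,2)] by (simp only: mult_cancel_left) simp
  then have "?\<delta> ^ 2 = 1"
    using m_ge_2 k by (intro power_eq_1_imp_power2_eq_1[of _ k]) auto
  then show ?thesis
    using rho_translation_diag_power[OF assms, of 2] by simp
qed

lemma rho_double_translation_unitriangular:
  assumes "c \<in> Zinv m"
  shows "unitriangular_level n 1 (\<rho> (0, 2 * c))"
  unfolding unitriangular_level_def
proof (intro conjI allI impI)
  have c2: "2 * c \<in> Zinv m"
    using assms by (simp add: Zinv_mult)
  show C: "\<rho> (0, 2 * c) \<in> carrier_mat n n"
    by (rule rho_carrier[OF c2])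
  fix i j assume ij: "i < n" "j < n" "j < i + 1"
  then consider "j < i" | "j = i" by linarith
  then show "\<rho> (0, 2 * c) $$ (i,j) = 1\<^sub>m n $$ (i,j)"
    by cases (use ij C upper_triangularD[OF rho_upper_triangular[OF c2]]
        rho_translation_diag_double[OF assms] in simp_all)
qed

lemma exists_first_nontrivial_level:
  assumes "n \<ge> 1" "inj_on \<rho> (carrier (BS m))"
  obtains d c where "1 \<le> d" "d < n" "\<And>c. c \<in> Zinv m \<Longrightarrow> unitriangular_level n d (\<rho> (0, 2 * c))"
    and "c \<in> Zinv m" "\<not> unitriangular_level n (Suc d) (\<rho> (0, 2 * c))"
proof -
  define P where "P d \<longleftrightarrow> (\<forall>c\<in>Zinv m. unitriangular_level n d (\<rho> (0, 2 * c)))" for d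
  have "P 1"
    unfolding P_def using rho_double_translation_unitriangular by blast
  have "\<not> P n"
  proof
    assume "P n"
    then have "unitriangular_level n n (\<rho> (0, 2 * 1))"
      unfolding P_def using Zinv_1 by blast
    then have "\<rho> (0, 2) = \<rho> (0, 0)"
      unfolding rho_one unitriangular_level_def by auto
    then show False
      using inj_onD[OF assms(2), of "(0, 2)" "(0, 0)"] by simp
  qed
  obtain k where "k < n - 1" "\<forall>i\<le>k. P (Suc i)" "\<not> P (Suc (Suc k))"
    using ex_least_nat_less[of "\<lambda>d. \<not> P (Suc d)" "n - 1"] \<open>P 1\<close> \<open>\<not> P n\<close> assms(1) by auto
  then show ?thesis
    using that[of "Suc k"] unfolding P_def by auto
qed

lemma exists_linear_entry:
  assumes "n \<ge> 1" "inj_on \<rho> (carrier (BS m))"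
  obtains i j z e where "i < j" "j < n" "z \<noteq> 0"
    "\<And>c. c \<in> Zinv m \<Longrightarrow> \<rho> (0, 2 * c) $$ (i,j) = c * (of_int z / of_nat m ^ e)"
proof -
  obtain d c where d: "1 \<le> d" "\<And>c. c \<in> Zinv m \<Longrightarrow> unitriangular_level n d (\<rho> (0, 2 * c))"
    and c: "c \<in> Zinv m" "\<not> unitriangular_level n (Suc d) (\<rho> (0, 2 * c))"
    using exists_first_nontrivial_level[OF assms] by metis
  obtain i where i: "i + d < n" "\<rho> (0, 2 * c) $$ (i, i + d) \<noteq> 0"
  proof -
    obtain i j where ij: "i < n" "j < n" "j < i + Suc d" "\<rho> (0, 2 * c) $$ (i,j) \<noteq> 1\<^sub>m n $$ (i,j)"
      using c d(2)[OF c(1)] unfolding unitriangular_level_def by auto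
    moreover have "\<not> j < i + d"
      using ij d(2)[OF c(1)] unfolding unitriangular_level_def by auto
    ultimately show ?thesis
      using that[of i] d(1) by (auto simp: less_Suc_eq)
  qed
  define \<phi> where "\<phi> a = \<rho> (0, 2 * a) $$ (i, i + d)" for a
  have "\<phi> (a + b) = \<phi> a + \<phi> b" if "a \<in> Zinv m" "b \<in> Zinv m" for a b
  proof -
    have "\<rho> (0, 2 * (a + b)) = \<rho> (0, 2 * a) * \<rho> (0, 2 * b)"
      using rho_mult[of "2 * a" "2 * b" 0 0] that by (simp add: Zinv_mult algebra_simps)
    then show ?thesis
      using unitriangular_level_mult_entry[OF d(2)[OF that(1)] d(2)[OF that(2)] d(1), of i "i + d"] i(1) d(1)
      unfolding \<phi>_def by simp
  qed
  then have linear: "\<phi> a = a * \<phi> 1" if "a \<in> Zinv m" for a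
    using additive_on_Zinv_imp_linear[OF m_pos _ that] by blast
  have "\<phi> 1 \<in> Zinv m"
    unfolding \<phi>_def using mat_overD(2)[OF rho_mat_over] i(1) by simp
  then obtain z e where "\<phi> 1 = of_int z / of_nat m ^ e"
    unfolding Zinv_def by blast
  moreover have "\<phi> 1 \<noteq> 0"
    using linear[OF c(1)] i(2) unfolding \<phi>_def by auto
  ultimately show ?thesis
    using that[of i "i + d" z e] linear d(1) i(1) unfolding \<phi>_def by auto
qed

lemma image_group_pow_translation:
  "b \<in> Zinv m \<Longrightarrow> \<rho> (0, b) [^]\<^bsub>image_group\<^esub> N = \<rho> (0, of_nat N * b)"
  by (induction N) (simp_all add: rho_one rho_mult Zinv_mult algebra_simps)

lemma image_group_pow_dilation: "\<rho> (k, 0) [^]\<^bsub>image_group\<^esub> N = \<rho> (int N * k, 0)"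
  by (induction N) (simp_all add: rho_one rho_mult algebra_simps)

lemma rho_mem_finite_index_subgroup:
  assumes K: "subgroup K image_group" "finite (rcosets\<^bsub>image_group\<^esub> K)"
  defines "F \<equiv> fact (card (rcosets\<^bsub>image_group\<^esub> K)) :: nat"
  assumes "int F dvd k" "Zinv_dvd m (of_nat F) b"
  shows "\<rho> (k, b) \<in> K"
proof -
  obtain q where k: "k = int F * q"
    using assms(4) ..
  obtain r where r: "r \<in> Zinv m" "b = of_nat F * r"
    using assms(5) unfolding Zinv_dvd_def by blast
  have "\<rho> (0, r) [^]\<^bsub>image_group\<^esub> F \<in> K" "\<rho> (q, 0) [^]\<^bsub>image_group\<^esub> F \<in> K"
    using group.nat_pow_fact_index_mem_subgroup[OF image_group_is_group K] r(1)
    unfolding F_def by auto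
  then have "\<rho> (0, b) * \<rho> (k, 0) \<in> K"
    using subgroup.m_closed[OF K(1)]
    by (simp add: image_group_pow_translation[OF r(1)] image_group_pow_dilation r(2) k mult.commute)
  moreover have "\<rho> (0, b) * \<rho> (k, 0) = \<rho> (k, b)"
    using rho_mult[of b 0 0 k] r by (simp add: Zinv_mult)
  ultimately show ?thesis
    by simp
qed

lemma rho_commutator:
  assumes "b \<in> Zinv m" "c \<in> Zinv m"
  shows "\<rho> (k, b) * (\<rho> (l, c) * (\<rho> (- k, - (of_nat m powi (- k) * b)) * \<rho> (- l, - (of_nat m powi (- l) * c))))
    = \<rho> (0, (of_nat m powi k - 1) * c - (of_nat m powi l - 1) * b)"
proof -
  define b' where "b' = - (of_nat m powi (- k) * b)"
  define c' where "c' = - (of_nat m powi (- l) * c)"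
  define x where "x = of_nat m powi (- k) * c' + b'"
  define y where "y = of_nat m powi l * x + c"
  have b': "b' \<in> Zinv m" and c': "c' \<in> Zinv m"
    using assms unfolding b'_def c'_def by (auto intro!: Zinv_mult Zinv_uminus)
  have x: "x \<in> Zinv m"
    unfolding x_def using b' c' by (intro Zinv_add[OF m_pos] Zinv_mult Zinv_power_int)
  have y: "y \<in> Zinv m"
    unfolding y_def using x assms(2) by (intro Zinv_add[OF m_pos] Zinv_mult Zinv_power_int)
  have "\<rho> (k, b) * (\<rho> (l, c) * (\<rho> (- k, b') * \<rho> (- l, c'))) = \<rho> (0, of_nat m powi k * y + b)"
    using rho_mult[OF b' c', of "- k" "- l"] rho_mult[OF assms(2) x, of l "- k - l"]
      rho_mult[OF assms(1) y, of k "- k"]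
    by (simp add: x_def y_def)
  also have "of_nat m powi k * y + b = (of_nat m powi k - 1) * c - (of_nat m powi l - 1) * b"
    using m_pos by (simp add: y_def x_def b'_def c'_def power_int_minus field_simps)
  finally show ?thesis
    unfolding b'_def c'_def .
qed

lemma cong_one_rho_commutator:
  assumes "cong_one m n N (\<rho> (k, b))" "b \<in> Zinv m" "c \<in> Zinv m"
  shows "cong_one m n N (\<rho> (0, (of_nat m powi k - 1) * c - (of_nat m powi l - 1) * b))"
proof -
  have "- (of_nat m powi (- k) * b) \<in> Zinv m" "- (of_nat m powi (- l) * c) \<in> Zinv m"
    using assms(2,3) by (auto intro!: Zinv_mult Zinv_uminus)
  then show ?thesis
    using cong_one_commutator[OF m_pos assms(1) rho_mat_over rho_mat_over rho_inverse(2)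
        rho_mat_over rho_mat_over rho_inverse(1)] assms(2,3)
    by (simp add: rho_commutator)
qed

lemma Zinv_dvd_of_cong_one_translation:
  assumes "i < j" "j < n" "z \<noteq> 0"
    and entry: "\<And>c. c \<in> Zinv m \<Longrightarrow> \<rho> (0, 2 * c) $$ (i,j) = c * (of_int z / of_nat m ^ e)"
    and N: "Y * z dvd int N * int m ^ e'"
    and c: "c \<in> Zinv m" "cong_one m n N (\<rho> (0, c))"
  shows "Zinv_dvd m (of_int Y) c"
proof -
  have "cong_one m n N (\<rho> (0, c) * \<rho> (0, c))"
    by (rule cong_one_mult[OF m_pos c(2) c(2) rho_mat_over[OF c(1)]])
  moreover have "\<rho> (0, c) * \<rho> (0, c) = \<rho> (0, 2 * c)"
    using rho_mult[OF c(1) c(1), of 0 0] by simp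
  ultimately have "cong_one m n N (\<rho> (0, 2 * c))"
    by simp
  then have "Zinv_dvd m (of_nat N) (\<rho> (0, 2 * c) $$ (i,j) - 1\<^sub>m n $$ (i,j))"
    using assms(1,2) by (intro cong_oneD) auto
  then have "Zinv_dvd m (of_nat N) (c * (of_int z / of_nat m ^ e))"
    using entry[OF c(1)] assms(1,2) by simp
  from Zinv_dvd_mult_right[OF this Zinv_power[of m e]]
  have Nc: "Zinv_dvd m (of_nat N) (c * of_int z)"
    using m_pos by simp
  have "Zinv_dvd m (of_int (Y * z)) (of_nat N)"
    using Zinv_dvd_divide_power[OF Zinv_dvd_of_int[OF N, of m], of e'] m_pos by simp
  from Zinv_dvd_trans[OF this Nc]
  have "Zinv_dvd m (of_int Y * of_int z) (c * of_int z)"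
    by simp
  then show ?thesis
    using Zinv_dvd_mult_cancel_right assms(3) by blast
qed

lemma image_subset_carrier_mat: "\<rho> ` carrier (BS m) \<subseteq> carrier_mat n n"
  using rho_carrier by force

lemma exists_modulus_for_translations:
  assumes "n \<ge> 1" "inj_on \<rho> (carrier (BS m))" "Y \<noteq> 0"
  obtains N where "N > 0" "coprime N m"
    "\<And>c. c \<in> Zinv m \<Longrightarrow> cong_one m n N (\<rho> (0, c)) \<Longrightarrow> Zinv_dvd m (of_int Y) c"
proof -
  obtain i j z e where ij: "i < j" "j < n" "z \<noteq> 0"
    and entry: "\<And>c. c \<in> Zinv m \<Longrightarrow> \<rho> (0, 2 * c) $$ (i,j) = c * (of_int z / of_nat m ^ e)"
    using exists_linear_entry[OF assms(1,2)] by metis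
  obtain N e' where N: "N > 0" "coprime N m" "nat \<bar>Y * z\<bar> dvd N * m ^ e'"
    using dvd_coprime_times_power[OF m_pos, of "nat \<bar>Y * z\<bar>"] assms(3) ij(3) by auto
  have "int (nat \<bar>Y * z\<bar>) dvd int (N * m ^ e')"
    using N(3) by (simp only: int_dvd_int_iff)
  then have YzN: "Y * z dvd int N * int m ^ e'"
    by simp
  show ?thesis
  proof (rule that[OF N(1,2)])
    show "Zinv_dvd m (of_int Y) c" if "c \<in> Zinv m" "cong_one m n N (\<rho> (0, c))" for c
      by (rule Zinv_dvd_of_cong_one_translation[OF ij entry YzN that])
  qed
qed

text \<open>The commutators of \<open>\<rho>(k,b)\<close> with \<open>a\<close> and with \<open>t\<close> are the translations by
  \<open>m\<^sup>k - 1\<close> and by \<open>(1 - m) b\<close>.\<close>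
lemma cong_one_rho_imp_dvd:
  assumes "F \<ge> 1"
    and translation_dvd: "\<And>c. c \<in> Zinv m \<Longrightarrow> cong_one m n N (\<rho> (0, c)) \<Longrightarrow>
      Zinv_dvd m (of_int ((int m ^ F - 1) * (int m - 1) * int F)) c"
    and "b \<in> Zinv m" "cong_one m n N (\<rho> (k, b))"
  shows "int F dvd k" "Zinv_dvd m (of_nat F) b"
proof -
  define Y where "Y = (int m ^ F - 1) * (int m - 1) * int F"
  have "cong_one m n N (\<rho> (0, of_nat m powi k - 1))"
    using cong_one_rho_commutator[OF assms(4,3) Zinv_1, of 0] by simp
  then have "Zinv_dvd m (of_int Y) (of_nat m powi k - 1)"
    unfolding Y_def by (intro translation_dvd Zinv_diff[OF m_pos]) simp_all
  then show "int F dvd k"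
    using Zinv_dvd_trans[OF Zinv_dvd_of_int[of "int m ^ F - 1" Y]] assms(1) m_ge_2
    by (intro powi_minus_one_Zinv_dvd_imp_dvd) (auto simp: Y_def)
  have "cong_one m n N (\<rho> (0, b * (1 - of_nat m)))"
    using cong_one_rho_commutator[OF assms(4,3) Zinv_0, of 1] by (simp add: algebra_simps)
  then have "Zinv_dvd m (of_int Y) (b * (1 - of_nat m))"
    unfolding Y_def using assms(3) by (intro translation_dvd Zinv_mult Zinv_diff[OF m_pos]) simp_all
  moreover have "Zinv_dvd m (of_nat F * (1 - of_nat m)) (of_int Y)"
    unfolding Zinv_dvd_def
    by (rule bexI[OF _ Zinv_of_int[of "1 - int m ^ F"]]) (simp add: Y_def algebra_simps)
  ultimately have "Zinv_dvd m (of_nat F * (1 - of_nat m)) (b * (1 - of_nat m))"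
    by (rule Zinv_dvd_trans[rotated])
  then show "Zinv_dvd m (of_nat F) b"
    by (rule Zinv_dvd_mult_cancel_right[rotated]) (use m_ge_2 in simp)
qed

theorem image_has_CSP:
  assumes "n \<ge> 1" "inj_on \<rho> (carrier (BS m))"
  shows "has_CSP m n (\<rho> ` carrier (BS m))"
  unfolding has_CSP_def
proof (intro allI impI, elim conjE)
  fix K assume K: "subgroup K image_group" "finite (rcosets\<^bsub>image_group\<^esub> K)"
  define F where "F = (fact (card (rcosets\<^bsub>image_group\<^esub> K)) :: nat)"
  have "F \<ge> 1"
    by (simp add: F_def)
  then have "int m ^ F - 1 \<noteq> 0"
    using one_less_power[of "int m" F] m_ge_2 by linarith
  then have "(int m ^ F - 1) * (int m - 1) * int F \<noteq> 0"
    using m_ge_2 \<open>F \<ge> 1\<close> by simp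
  then obtain N where N: "N > 0" "coprime N m"
    and translation_dvd: "\<And>c. c \<in> Zinv m \<Longrightarrow> cong_one m n N (\<rho> (0, c)) \<Longrightarrow>
      Zinv_dvd m (of_int ((int m ^ F - 1) * (int m - 1) * int F)) c"
    using exists_modulus_for_translations[OF assms] by metis
  have "cong_subgroup m n (\<rho> ` carrier (BS m)) N \<subseteq> K"
  proof
    fix A assume "A \<in> cong_subgroup m n (\<rho> ` carrier (BS m)) N"
    then obtain k b where A: "A = \<rho> (k, b)" "b \<in> Zinv m" "cong_one m n N (\<rho> (k, b))"
      using cong_subgroup_iff[OF image_subset_carrier_mat] by force
    have "int F dvd k" "Zinv_dvd m (of_nat F) b"
      using cong_one_rho_imp_dvd[OF \<open>F \<ge> 1\<close> translation_dvd A(2,3)] by blast+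
    then show "A \<in> K"
      unfolding A(1) F_def by (rule rho_mem_finite_index_subgroup[OF K])
  qed
  then show "\<exists>N>0. coprime N m \<and> cong_subgroup m n (\<rho> ` carrier (BS m)) N \<subseteq> K"
    using N by blast
qed

end

theorem lemma4p9:
  fixes m n :: nat and \<rho> :: "int \<times> rat \<Rightarrow> rat mat"
  assumes "m \<ge> 2" and "n \<ge> 1"
    and "\<rho> \<in> hom (BS m) (GLZ_group m n)"
    and "\<rho> ` carrier (BS m) \<subseteq> TZ m n"
    and "inj_on \<rho> (carrier (BS m))"
    and "\<exists>i<n. \<rho> BS_a $$ (i,i) \<noteq> 1"
    and "\<forall>i<n. \<rho> BS_t $$ (i,i) > 0"
  shows "has_CSP m n (\<rho> ` carrier (BS m))"
proof -
  interpret triangular_BS_rep m n \<rho>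
    using assms(1,3,4) by unfold_locales
  show ?thesis
    using image_has_CSP assms(2,5) .
qed

end
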